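(* Let $z:[0,\infty)\to C$ be a strong solution of the differential inclusion $\dot z(t)\in S(z(t))$ with $0\notin S(z(0))$. Then there exists $T>0$ such that $$\varphi(z(T))<\sup_{t\in[0,T]}\varphi(z(t))\le\varphi(z(0)).$$
   Context: $H$ is a real Hilbert space with inner product $\langle\cdot,\cdot\rangle$ and norm $\|\cdot\|$. $C\subset H$ is nonempty, bounded, convex and closed; $N_C(u)=\{z:\langle z,w-u\rangle\le0\ \forall w\in C\}$. On an open convex set $U\supset C$, $j\in C^{1,1}_L(U)$ (continuously Fréchet differentiable with $L$-Lipschitz gradient). $\eta:H\to\mathbb R$ is proper, convex, lower semicontinuous with $\mathrm{dom}(\eta)=H$, locally Lipschitz and bounded below on $C$, and there is $L_\eta:H\to\mathbb R$, bounded on bounded sets, with $L_\eta(u)\ge\sup_{z:\eta(z)\le\eta(u)}\frac{\eta(u)-\eta(z)}{\|u-z\|}$ for all $u$; $\partial\eta$ is its convex subdifferential. $\varphi:=j+\eta$ and $S(u):=-\nabla j(u)-\partial\eta(u)-N_C(u)$ for $u\in C$. A strong solution of $\dot z\in S(z)$ is a function $z\in C([0,\infty),H)$ that is absolutely continuous on every compact interval $[a,b]\subset(0,\infty)$ and satisfies $\dot z(t)\in S(z(t))$ for a.e. $t$. *)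

theory Defs
  imports "HOL-Analysis.Analysis"
begin

definition normal_cone :: "'a::real_inner set \<Rightarrow> 'a \<Rightarrow> 'a set" where
  "normal_cone C u = {z. \<forall>w\<in>C. inner z (w - u) \<le> 0}"

definition subdiff :: "('a::real_inner \<Rightarrow> real) \<Rightarrow> 'a \<Rightarrow> 'a set" where
  "subdiff f u = {g. \<forall>w. f u + inner g (w - u) \<le> f w}"

definition lsc :: "('a::topological_space \<Rightarrow> real) \<Rightarrow> bool" where
  "lsc f \<longleftrightarrow> (\<forall>c. closed {x. f x \<le> c})"

definition locally_lipschitz :: "('a::metric_space \<Rightarrow> 'b::metric_space) \<Rightarrow> bool" where
  "locally_lipschitz f \<longleftrightarrow> (\<forall>u. \<exists>e>0. \<exists>K. lipschitz_on K (ball u e) f)"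

definition abs_cont_on :: "real \<Rightarrow> real \<Rightarrow> (real \<Rightarrow> 'a::real_normed_vector) \<Rightarrow> bool" where
  "abs_cont_on a b f \<longleftrightarrow>
     (\<forall>\<epsilon>>0. \<exists>\<delta>>0. \<forall>(n::nat) (s::nat \<Rightarrow> real) (t::nat \<Rightarrow> real).
        (\<forall>k<n. a \<le> s k \<and> s k \<le> t k \<and> t k \<le> b) \<and>
        (\<forall>k<n. \<forall>l<n. k \<noteq> l \<longrightarrow> t k \<le> s l \<or> t l \<le> s k) \<and>
        (\<Sum>k<n. t k - s k) < \<delta>
        \<longrightarrow> (\<Sum>k<n. norm (f (t k) - f (s k))) < \<epsilon>)"

definition S_map :: "'a::real_inner set \<Rightarrow> ('a \<Rightarrow> 'a) \<Rightarrow> ('a \<Rightarrow> real) \<Rightarrow> 'a \<Rightarrow> 'a set" where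
  "S_map C gj eta u = {- gj u - g - n | g n. g \<in> subdiff eta u \<and> n \<in> normal_cone C u}"

definition strong_solution :: "'a::real_inner set \<Rightarrow> ('a \<Rightarrow> 'a) \<Rightarrow> ('a \<Rightarrow> real) \<Rightarrow> (real \<Rightarrow> 'a) \<Rightarrow> bool" where
  "strong_solution C gj eta z \<longleftrightarrow>
     (\<forall>t\<ge>0. z t \<in> C) \<and>
     continuous_on {0..} z \<and>
     (\<forall>a b. 0 < a \<longrightarrow> a \<le> b \<longrightarrow> abs_cont_on a b z) \<and>
     (AE t in lborel. 0 < t \<longrightarrow>
        (\<exists>v. (z has_vector_derivative v) (at t) \<and> v \<in> S_map C gj eta (z t)))"

end

theory Submission
  imports Defs
begin

text \<open>
  Write \<open>\<phi> = j + eta\<close>. At almost every \<open>t > 0\<close> the velocity is \<open>v = - \<nabla>j(z t) - g - n\<close> with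
  \<open>g \<in> \<partial>eta(z t)\<close> and \<open>n \<in> N\<^sub>C(z t)\<close>; the subgradient inequality for \<open>g\<close>, the normal-cone
  inequality for \<open>n\<close> and the differentiability of \<open>j\<close> give
  \<open>\<phi>(z(t - s)) - \<phi>(z t) \<ge> s \<parallel>v\<parallel>\<^sup>2 - o(s)\<close> as \<open>s \<rightarrow> 0\<^sup>+\<close>.
  Since \<open>\<phi>\<close> is Lipschitz on the bounded set \<open>C\<close>, \<open>\<phi> \<circ> z\<close> is absolutely continuous away from \<open>0\<close>,
  and an absolutely continuous function whose left Dini derivative is \<open>\<le> 0\<close> almost everywhere is
  nonincreasing (this uses Luzin's property (N)). Hence \<open>\<phi> \<circ> z\<close> is nonincreasing and the supremum
  over \<open>[0, T]\<close> is \<open>\<phi>(z 0)\<close>. If \<open>\<phi> \<circ> z\<close> were constant, the rate estimate would force \<open>z' = 0\<close>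
  almost everywhere, so \<open>z\<close> would be constant and \<open>0 \<in> S(z 0)\<close>; thus \<open>\<phi>(z T) < \<phi>(z 0)\<close> for some \<open>T > 0\<close>.
\<close>

section \<open>Absolutely continuous functions\<close>

definition nonoverlapping_subintervals :: "real \<Rightarrow> real \<Rightarrow> nat \<Rightarrow> (nat \<Rightarrow> real) \<Rightarrow> (nat \<Rightarrow> real) \<Rightarrow> bool" where
  "nonoverlapping_subintervals a b n s t \<longleftrightarrow>
     (\<forall>k<n. a \<le> s k \<and> s k \<le> t k \<and> t k \<le> b) \<and> (\<forall>k<n. \<forall>l<n. k \<noteq> l \<longrightarrow> t k \<le> s l \<or> t l \<le> s k)"

lemma abs_cont_on_iff:
  "abs_cont_on a b f \<longleftrightarrow>
     (\<forall>\<epsilon>>0. \<exists>\<delta>>0. \<forall>n s t. nonoverlapping_subintervals a b n s t \<and> (\<Sum>k<n. t k - s k) < \<delta>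
        \<longrightarrow> (\<Sum>k<n. norm (f (t k) - f (s k))) < \<epsilon>)"
  by (simp only: abs_cont_on_def nonoverlapping_subintervals_def conj_assoc)

lemma abs_cont_onE:
  assumes "abs_cont_on a b f" "\<epsilon> > 0"
  obtains \<delta> where "\<delta> > 0"
    and "\<And>n s t. nonoverlapping_subintervals a b n s t \<Longrightarrow> (\<Sum>k<n. t k - s k) < \<delta>
           \<Longrightarrow> (\<Sum>k<n. norm (f (t k) - f (s k))) < \<epsilon>"
  using assms unfolding abs_cont_on_iff by meson

lemma abs_cont_on_imp_continuous_on:
  fixes g :: "real \<Rightarrow> 'a::real_normed_vector"
  assumes "abs_cont_on a b g"
  shows "continuous_on {a..b} g"
  unfolding continuous_on_iff
proof (intro ballI allI impI)
  fix x e assume x: "x \<in> {a..b}" and e: "(0::real) < e"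
  obtain \<delta> where \<delta>: "\<delta> > 0" and ac: "\<And>n s t. nonoverlapping_subintervals a b n s t
      \<Longrightarrow> (\<Sum>k<n. t k - s k) < \<delta> \<Longrightarrow> (\<Sum>k<n. norm (g (t k) - g (s k))) < e"
    using abs_cont_onE[OF assms e] by blast
  show "\<exists>d>0. \<forall>y\<in>{a..b}. dist y x < d \<longrightarrow> dist (g y) (g x) < e"
  proof (intro exI[of _ \<delta>] conjI ballI impI \<delta>)
    fix y assume y: "y \<in> {a..b}" "dist y x < \<delta>"
    have "norm (g (max x y) - g (min x y)) < e"
      using ac[of 1 "\<lambda>_. min x y" "\<lambda>_. max x y"] x y
      by (auto simp: nonoverlapping_subintervals_def dist_real_def)
    then show "dist (g y) (g x) < e"
      by (cases "x \<le> y") (auto simp: dist_norm norm_minus_commute)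
  qed
qed

lemma abs_cont_on_add:
  fixes f g :: "real \<Rightarrow> 'a::real_normed_vector"
  assumes f: "abs_cont_on a b f" and g: "abs_cont_on a b g"
  shows "abs_cont_on a b (\<lambda>x. f x + g x)"
  unfolding abs_cont_on_iff
proof (intro allI impI)
  fix e :: real assume "e > 0"
  then have e2: "e/2 > 0" by simp
  obtain \<delta>1 where "\<delta>1 > 0" and \<delta>1: "\<And>n s t. nonoverlapping_subintervals a b n s t
      \<Longrightarrow> (\<Sum>k<n. t k - s k) < \<delta>1 \<Longrightarrow> (\<Sum>k<n. norm (f (t k) - f (s k))) < e/2"
    using abs_cont_onE[OF f e2] by blast
  obtain \<delta>2 where "\<delta>2 > 0" and \<delta>2: "\<And>n s t. nonoverlapping_subintervals a b n s t
      \<Longrightarrow> (\<Sum>k<n. t k - s k) < \<delta>2 \<Longrightarrow> (\<Sum>k<n. norm (g (t k) - g (s k))) < e/2"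
    using abs_cont_onE[OF g e2] by blast
  show "\<exists>\<delta>>0. \<forall>n s t. nonoverlapping_subintervals a b n s t \<and> (\<Sum>k<n. t k - s k) < \<delta>
          \<longrightarrow> (\<Sum>k<n. norm (f (t k) + g (t k) - (f (s k) + g (s k)))) < e"
  proof (intro exI[of _ "min \<delta>1 \<delta>2"] conjI allI impI)
    fix n s t assume H: "nonoverlapping_subintervals a b n s t \<and> (\<Sum>k<n. t k - s k) < min \<delta>1 \<delta>2"
    have "(\<Sum>k<n. norm (f (t k) + g (t k) - (f (s k) + g (s k))))
        \<le> (\<Sum>k<n. norm (f (t k) - f (s k))) + (\<Sum>k<n. norm (g (t k) - g (s k)))"
      by (simp add: sum.distrib[symmetric] sum_mono norm_diff_triangle_ineq)
    also have "\<dots> < e/2 + e/2"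
      using H \<delta>1 \<delta>2 by (intro add_strict_mono) auto
    finally show "(\<Sum>k<n. norm (f (t k) + g (t k) - (f (s k) + g (s k)))) < e" by simp
  qed (use \<open>\<delta>1 > 0\<close> \<open>\<delta>2 > 0\<close> in simp)
qed

lemma abs_cont_on_id: "abs_cont_on a b (\<lambda>x. x)"
  unfolding abs_cont_on_iff
proof (intro allI impI)
  fix \<epsilon> :: real assume "\<epsilon> > 0"
  moreover have "(\<Sum>k<n. norm (t k - s k)) = (\<Sum>k<n. t k - s k)"
    if "nonoverlapping_subintervals a b n s t" for n s t
    using that by (intro sum.cong) (auto simp: nonoverlapping_subintervals_def)
  ultimately show "\<exists>\<delta>>0. \<forall>n s t. nonoverlapping_subintervals a b n s t \<and> (\<Sum>k<n. t k - s k) < \<delta>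
          \<longrightarrow> (\<Sum>k<n. norm (t k - s k)) < \<epsilon>"
    by auto
qed

lemma abs_cont_on_lipschitz_compose:
  fixes z :: "real \<Rightarrow> 'a::real_normed_vector" and \<phi> :: "'a \<Rightarrow> 'b::real_normed_vector"
  assumes ac: "abs_cont_on a b z" and lip: "M-lipschitz_on C \<phi>" and zC: "z ` {a..b} \<subseteq> C"
  shows "abs_cont_on a b (\<lambda>x. \<phi> (z x))"
  unfolding abs_cont_on_iff
proof (intro allI impI)
  fix e :: real assume e: "e > 0"
  have M: "M \<ge> 0" using lipschitz_on_nonneg[OF lip] .
  then have e': "e / (M + 1) > 0" using e by simp
  obtain \<delta> where "\<delta> > 0" and \<delta>: "\<And>n s t. nonoverlapping_subintervals a b n s t
      \<Longrightarrow> (\<Sum>k<n. t k - s k) < \<delta> \<Longrightarrow> (\<Sum>k<n. norm (z (t k) - z (s k))) < e / (M + 1)"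
    using abs_cont_onE[OF ac e'] by blast
  show "\<exists>\<delta>>0. \<forall>n s t. nonoverlapping_subintervals a b n s t \<and> (\<Sum>k<n. t k - s k) < \<delta>
          \<longrightarrow> (\<Sum>k<n. norm (\<phi> (z (t k)) - \<phi> (z (s k)))) < e"
  proof (intro exI[of _ \<delta>] conjI allI impI \<open>\<delta> > 0\<close>)
    fix n s t assume H: "nonoverlapping_subintervals a b n s t \<and> (\<Sum>k<n. t k - s k) < \<delta>"
    have "(\<Sum>k<n. norm (\<phi> (z (t k)) - \<phi> (z (s k)))) \<le> (\<Sum>k<n. M * norm (z (t k) - z (s k)))"
    proof (rule sum_mono)
      fix k assume "k \<in> {..<n}"
      then have "z (s k) \<in> C" "z (t k) \<in> C"
        using H zC by (auto simp: nonoverlapping_subintervals_def image_subset_iff)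
      then show "norm (\<phi> (z (t k)) - \<phi> (z (s k))) \<le> M * norm (z (t k) - z (s k))"
        using lipschitz_on_normD[OF lip] by blast
    qed
    also have "\<dots> \<le> M * (e / (M + 1))"
    proof -
      have "(\<Sum>k<n. norm (z (t k) - z (s k))) < e / (M + 1)" using H \<delta> by blast
      then show ?thesis unfolding sum_distrib_left[symmetric] using M by (intro mult_left_mono) auto
    qed
    also have "\<dots> < e" using e M by (simp add: field_simps)
    finally show "(\<Sum>k<n. norm (\<phi> (z (t k)) - \<phi> (z (s k)))) < e" .
  qed
qed

lemma real_intervals_interior_disjoint:
  fixes c d c' d' :: real
  assumes "interior {c..d} \<inter> interior {c'..d'} = {}" "c < d" "c' < d'"
  shows "d \<le> c' \<or> d' \<le> c"
proof (rule ccontr)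
  assume "\<not> ?thesis"
  then have "(max c c' + min d d') / 2 \<in> interior {c..d} \<inter> interior {c'..d'}"
    using assms(2,3) by auto
  with assms(1) show False by blast
qed

lemma nonoverlapping_subintervals_of_division:
  assumes div: "\<D> division_of \<Union>\<D>" and sub: "\<Union>\<D> \<subseteq> {a..b}"
    and int: "\<And>K. K \<in> \<D> \<Longrightarrow> interior K \<noteq> {}"
    and f: "bij_betw f {..<n} \<D>" and st: "\<And>k. k < n \<Longrightarrow> s k \<in> f k \<and> t k \<in> f k \<and> s k \<le> t k"
  shows "nonoverlapping_subintervals a b n s t" and "(\<Sum>k<n. t k - s k) \<le> measure lebesgue (\<Union>\<D>)"
proof -
  have fD: "f k \<in> \<D>" if "k < n" for k using f that by (auto simp: bij_betw_def)
  have ivl: "\<exists>c d. c < d \<and> f k = {c..d}" if k: "k < n" for k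
  proof -
    obtain c d where "f k = cbox c d" using division_ofD(4)[OF div fD[OF k]] by blast
    with int[OF fD[OF k]] show ?thesis by auto
  qed
  have "a \<le> s k \<and> s k \<le> t k \<and> t k \<le> b" if k: "k < n" for k
  proof -
    have "s k \<in> \<Union>\<D>" "t k \<in> \<Union>\<D>" using st[OF k] fD[OF k] by blast+
    with sub st[OF k] show ?thesis by auto
  qed
  moreover have "t k \<le> s l \<or> t l \<le> s k" if kl: "k < n" "l < n" "k \<noteq> l" for k l
  proof -
    from kl have "f k \<noteq> f l" using f by (auto simp: bij_betw_def inj_on_def)
    then have "interior (f k) \<inter> interior (f l) = {}"
      using division_ofD(5)[OF div] fD kl by blast
    moreover obtain c d c' d' where "c < d" "f k = {c..d}" "c' < d'" "f l = {c'..d'}"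
      using ivl kl by metis
    ultimately show ?thesis
      using real_intervals_interior_disjoint[of c d c' d'] st[OF kl(1)] st[OF kl(2)] by auto
  qed
  ultimately show "nonoverlapping_subintervals a b n s t"
    unfolding nonoverlapping_subintervals_def by blast
  have "(\<Sum>k<n. t k - s k) \<le> (\<Sum>k<n. measure lebesgue (f k))"
  proof (rule sum_mono)
    fix k assume "k \<in> {..<n}"
    with ivl obtain c d where "c < d" "f k = {c..d}" by blast
    with st[of k] \<open>k \<in> {..<n}\<close> show "t k - s k \<le> measure lebesgue (f k)" by auto
  qed
  also have "\<dots> = measure lebesgue (\<Union>\<D>)"
    using sum.reindex_bij_betw[OF f, of "measure lebesgue"] content_division[OF div] by simp
  finally show "(\<Sum>k<n. t k - s k) \<le> measure lebesgue (\<Union>\<D>)" .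
qed

lemma abs_cont_on_division_sum:
  fixes g :: "real \<Rightarrow> 'a::real_normed_vector"
  assumes ac: "abs_cont_on a b g" and e: "e > 0"
  obtains \<delta> where "\<delta> > 0"
    and "\<And>\<D> p q. \<D> division_of \<Union>\<D> \<Longrightarrow> \<Union>\<D> \<subseteq> {a..b} \<Longrightarrow> (\<And>K. K \<in> \<D> \<Longrightarrow> interior K \<noteq> {})
           \<Longrightarrow> measure lebesgue (\<Union>\<D>) < \<delta> \<Longrightarrow> (\<And>K. K \<in> \<D> \<Longrightarrow> p K \<in> K \<and> q K \<in> K)
           \<Longrightarrow> (\<Sum>K\<in>\<D>. norm (g (q K) - g (p K))) < e"
proof -
  obtain \<delta> where "\<delta> > 0" and \<delta>: "\<And>n s t. nonoverlapping_subintervals a b n s t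
      \<Longrightarrow> (\<Sum>k<n. t k - s k) < \<delta> \<Longrightarrow> (\<Sum>k<n. norm (g (t k) - g (s k))) < e"
    using abs_cont_onE[OF ac e] by blast
  have "(\<Sum>K\<in>\<D>. norm (g (q K) - g (p K))) < e"
    if div: "\<D> division_of \<Union>\<D>" and sub: "\<Union>\<D> \<subseteq> {a..b}" and int: "\<And>K. K \<in> \<D> \<Longrightarrow> interior K \<noteq> {}"
      and small: "measure lebesgue (\<Union>\<D>) < \<delta>" and pq: "\<And>K. K \<in> \<D> \<Longrightarrow> p K \<in> K \<and> q K \<in> K" for \<D> p q
  proof -
    define n where "n = card \<D>"
    obtain f where f: "bij_betw f {..<n} \<D>"
      using ex_bij_betw_nat_finite[OF division_ofD(1)[OF div]] by (auto simp: n_def atLeast0LessThan)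
    define s where "s k = min (p (f k)) (q (f k))" for k
    define t where "t k = max (p (f k)) (q (f k))" for k
    have "s k \<in> f k \<and> t k \<in> f k \<and> s k \<le> t k" if "k < n" for k
      using pq[of "f k"] f that by (auto simp: s_def t_def min_def max_def bij_betw_def)
    note enum = nonoverlapping_subintervals_of_division[OF div sub int f this]
    have "(\<Sum>k<n. norm (g (t k) - g (s k))) < e"
      using enum small by (intro \<delta>) auto
    moreover have "(\<Sum>k<n. norm (g (t k) - g (s k))) = (\<Sum>K\<in>\<D>. norm (g (q K) - g (p K)))"
      unfolding sum.reindex_bij_betw[OF f, symmetric]
      by (intro sum.cong) (auto simp: s_def t_def min_def max_def norm_minus_commute)
    ultimately show ?thesis by simp
  qed
  with \<open>\<delta> > 0\<close> show thesis using that by blast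
qed

lemma abs_cont_on_division_image_measure:
  fixes g :: "real \<Rightarrow> real"
  assumes ac: "abs_cont_on a b g" and e: "e > 0"
  obtains \<delta> where "\<delta> > 0"
    and "\<And>\<D>. \<D> division_of \<Union>\<D> \<Longrightarrow> \<Union>\<D> \<subseteq> {a..b} \<Longrightarrow> (\<And>K. K \<in> \<D> \<Longrightarrow> interior K \<noteq> {})
           \<Longrightarrow> measure lebesgue (\<Union>\<D>) < \<delta> \<Longrightarrow> measure lebesgue (\<Union>K\<in>\<D>. g ` K) < e"
proof -
  obtain \<delta> where "\<delta> > 0" and \<delta>: "\<And>\<D> p q. \<D> division_of \<Union>\<D> \<Longrightarrow> \<Union>\<D> \<subseteq> {a..b}
      \<Longrightarrow> (\<And>K. K \<in> \<D> \<Longrightarrow> interior K \<noteq> {}) \<Longrightarrow> measure lebesgue (\<Union>\<D>) < \<delta>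
      \<Longrightarrow> (\<And>K. K \<in> \<D> \<Longrightarrow> p K \<in> K \<and> q K \<in> K) \<Longrightarrow> (\<Sum>K\<in>\<D>. norm (g (q K) - g (p K))) < e"
    using abs_cont_on_division_sum[OF ac e] by blast
  have "measure lebesgue (\<Union>K\<in>\<D>. g ` K) < e"
    if div: "\<D> division_of \<Union>\<D>" and sub: "\<Union>\<D> \<subseteq> {a..b}" and int: "\<And>K. K \<in> \<D> \<Longrightarrow> interior K \<noteq> {}"
      and small: "measure lebesgue (\<Union>\<D>) < \<delta>" for \<D>
  proof -
    have "\<exists>lo hi. lo \<in> K \<and> hi \<in> K \<and> compact (g ` K) \<and> g ` K \<subseteq> {g lo..g hi}" if K: "K \<in> \<D>" for K
    proof -
      have "continuous_on K g"
        using abs_cont_on_imp_continuous_on[OF ac] sub K by (blast intro: continuous_on_subset)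
      moreover have "compact K" "K \<noteq> {}" using division_ofD(2,3,4)[OF div K] by auto
      ultimately show ?thesis
        using continuous_attains_inf[of K g] continuous_attains_sup[of K g] compact_continuous_image
        by (metis atLeastAtMost_iff image_subset_iff)
    qed
    then obtain lo hi where lohi: "\<And>K. K \<in> \<D> \<Longrightarrow>
        lo K \<in> K \<and> hi K \<in> K \<and> compact (g ` K) \<and> g ` K \<subseteq> {g (lo K)..g (hi K)}"
      by metis
    have "measure lebesgue (\<Union>K\<in>\<D>. g ` K) \<le> (\<Sum>K\<in>\<D>. measure lebesgue (g ` K))"
      using lohi division_ofD(1)[OF div] lmeasurable_compact
      by (intro measure_UNION_le) auto
    also have "\<dots> \<le> (\<Sum>K\<in>\<D>. norm (g (hi K) - g (lo K)))"
    proof (rule sum_mono)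
      fix K assume "K \<in> \<D>"
      then have "measure lebesgue (g ` K) \<le> measure lebesgue {g (lo K)..g (hi K)}"
        using lohi lmeasurable_compact by (intro measure_mono_fmeasurable) auto
      then show "measure lebesgue (g ` K) \<le> norm (g (hi K) - g (lo K))" by (auto split: if_splits)
    qed
    also have "\<dots> < e" using lohi by (intro \<delta>[OF div sub int small]) auto
    finally show ?thesis .
  qed
  with \<open>\<delta> > 0\<close> show thesis using that by blast
qed

lemma negligible_abs_cont_image:
  fixes g :: "real \<Rightarrow> real"
  assumes ac: "abs_cont_on a b g" and S: "S \<subseteq> {a..b}" "negligible S"
  shows "negligible (g ` S)"
proof (cases "a < b")
  case False
  then have "S \<subseteq> {a}" using S(1) by auto
  then show ?thesis by (meson finite.emptyI finite_insert finite_imageI finite_subset negligible_finite)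
next
  case True
  show ?thesis
    unfolding negligible_outer_le
  proof (intro allI impI)
    fix e :: real assume e: "e > 0"
    obtain \<delta> where "\<delta> > 0" and \<delta>: "\<And>\<D>. \<D> division_of \<Union>\<D> \<Longrightarrow> \<Union>\<D> \<subseteq> {a..b}
        \<Longrightarrow> (\<And>K. K \<in> \<D> \<Longrightarrow> interior K \<noteq> {}) \<Longrightarrow> measure lebesgue (\<Union>\<D>) < \<delta>
        \<Longrightarrow> measure lebesgue (\<Union>K\<in>\<D>. g ` K) < e"
      using abs_cont_on_division_image_measure[OF ac e] by blast
    have "S \<in> lmeasurable" "measure lebesgue S = 0" using S(2) negligible_iff_measure by blast+
    obtain \<D> where "countable \<D>"
      and \<D>: "\<And>K. K \<in> \<D> \<Longrightarrow> K \<subseteq> cbox a b \<and> K \<noteq> {} \<and> (\<exists>c d. K = cbox c d)"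
      and pw: "pairwise (\<lambda>A B. interior A \<inter> interior B = {}) \<D>"
      and int: "\<And>K. K \<in> \<D> \<Longrightarrow> box a b \<noteq> {} \<Longrightarrow> interior K \<noteq> {}"
      and cover: "S \<subseteq> \<Union>\<D>" and "\<Union>\<D> \<in> lmeasurable"
      and small: "measure lebesgue (\<Union>\<D>) \<le> measure lebesgue S + \<delta>/2"
      by (rule measurable_outer_intervals_bounded[OF \<open>S \<in> lmeasurable\<close>, of a b "\<delta>/2"])
        (use S(1) \<open>\<delta> > 0\<close> in auto)
    have img: "g ` K \<in> lmeasurable" if "K \<in> \<D>" for K
    proof -
      from \<D>[OF that] have "compact K" "K \<subseteq> {a..b}" by auto
      then show ?thesis
        by (intro lmeasurable_compact compact_continuous_image
            continuous_on_subset[OF abs_cont_on_imp_continuous_on[OF ac]])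
    qed
    have bound: "measure lebesgue (\<Union>K\<in>\<D>'. g ` K) \<le> e" if "\<D>' \<subseteq> \<D>" "finite \<D>'" for \<D>'
    proof -
      have "interior K1 \<inter> interior K2 = {}" if "K1 \<in> \<D>'" "K2 \<in> \<D>'" "K1 \<noteq> K2" for K1 K2
        using pw that \<open>\<D>' \<subseteq> \<D>\<close> by (auto dest: pairwiseD)
      moreover have "K \<noteq> {}" "\<exists>c d. K = cbox c d" if "K \<in> \<D>'" for K
        using \<D> that \<open>\<D>' \<subseteq> \<D>\<close> by blast+
      ultimately have div: "\<D>' division_of \<Union>\<D>'"
        using \<open>finite \<D>'\<close> by (intro division_ofI) auto
      have "measure lebesgue (\<Union>\<D>') \<le> measure lebesgue (\<Union>\<D>)"
        using lmeasurable_division[OF div] \<open>\<Union>\<D> \<in> lmeasurable\<close> that(1)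
        by (intro measure_mono_fmeasurable) auto
      then have "measure lebesgue (\<Union>\<D>') < \<delta>"
        using small \<open>measure lebesgue S = 0\<close> \<open>\<delta> > 0\<close> by linarith
      moreover have "\<Union>\<D>' \<subseteq> {a..b}" using that(1) \<D> by fastforce
      ultimately show ?thesis
        using \<delta>[OF div] int that(1) True by (fastforce intro: less_imp_le)
    qed
    have "g ` S \<subseteq> (\<Union>K\<in>\<D>. g ` K)" using cover by blast
    moreover have "(\<Union>K\<in>\<D>. g ` K) \<in> lmeasurable" "measure lebesgue (\<Union>K\<in>\<D>. g ` K) \<le> e"
      using fmeasurable_UN_bound[OF \<open>countable \<D>\<close> img bound] measure_UN_bound[OF \<open>countable \<D>\<close> img bound]
      by auto
    ultimately show "\<exists>T. g ` S \<subseteq> T \<and> T \<in> lmeasurable \<and> measure lebesgue T \<le> e" by blast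
  qed
qed

section \<open>Monotonicity from one-sided derivative bounds\<close>

lemma continuous_on_first_crossing:
  fixes g :: "real \<Rightarrow> real"
  assumes cont: "continuous_on {a..b} g" and y: "g a < y" "y < g b" and "a \<le> b"
  obtains t where "a < t" "t \<le> b" "g t = y" "\<And>x. a \<le> x \<Longrightarrow> x < t \<Longrightarrow> g x < y"
proof -
  define Z where "Z = {x \<in> {a..b}. g x = y}"
  have "closed Z" unfolding Z_def by (rule continuous_closed_preimage_constant[OF cont]) simp
  moreover have "Z \<noteq> {}" using IVT'[of g a y b] cont y \<open>a \<le> b\<close> by (force simp: Z_def)
  moreover have "bdd_below Z" unfolding Z_def by (rule bdd_belowI[of _ a]) auto
  ultimately have tZ: "Inf Z \<in> Z" by (rule closed_contains_Inf[rotated 2])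
  have below: "g x < y" if x: "a \<le> x" "x < Inf Z" for x
  proof (rule ccontr)
    assume "\<not> g x < y"
    moreover have "x \<le> b" using x tZ by (auto simp: Z_def)
    moreover have "continuous_on {a..x} g" using cont by (rule continuous_on_subset) (use \<open>x \<le> b\<close> in auto)
    ultimately obtain x' where "a \<le> x'" "x' \<le> x" "g x' = y" using IVT'[of g a y x] y x by force
    then have "Inf Z \<le> x'" using \<open>bdd_below Z\<close> \<open>x \<le> b\<close> by (intro cInf_lower) (auto simp: Z_def)
    with x \<open>x' \<le> x\<close> show False by simp
  qed
  have "a \<noteq> Inf Z" using tZ y by (auto simp: Z_def)
  with tZ below show thesis by (intro that[of "Inf Z"]) (auto simp: Z_def)
qed

lemma abs_cont_on_antimono_if_left_dini_nonpos:
  fixes F :: "real \<Rightarrow> real"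
  assumes "a \<le> b" and ac: "abs_cont_on a b F" and N: "N \<in> null_sets lebesgue"
    and dini: "\<And>t. t \<in> {a<..b} \<Longrightarrow> t \<notin> N \<Longrightarrow> \<forall>\<epsilon>>0. \<forall>\<^sub>F s in at_right 0. F t - F (t - s) \<le> \<epsilon> * s"
  shows "F b \<le> F a"
proof (rule ccontr)
  assume "\<not> F b \<le> F a"
  with \<open>a \<le> b\<close> have "a < b" "F a < F b" by (auto simp: order.order_iff_strict)
  (* Tilt F so that it still increases, pick a level y of the tilted function g that is not
     attained on the null set N (Luzin), and look at the first time t where g reaches y:
     there the tilt makes the left Dini bound at t fail. *)
  define \<epsilon> where "\<epsilon> = (F b - F a) / (2 * (b - a))"
  have "\<epsilon> > 0" using \<open>a < b\<close> \<open>F a < F b\<close> by (simp add: \<epsilon>_def)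
  define g where "g x = F x + - \<epsilon> * x" for x
  have "abs_cont_on a b (\<lambda>x. - \<epsilon> * x)"
    using abs_cont_on_lipschitz_compose[OF abs_cont_on_id
        lipschitz_on_cmult_real[OF lipschitz_on_id[of UNIV], where a = "- \<epsilon>"]]
    by simp
  then have gac: "abs_cont_on a b g" unfolding g_def using ac by (rule abs_cont_on_add[rotated])
  have "g b - g a = (F b - F a) - \<epsilon> * (b - a)" by (simp add: g_def algebra_simps)
  also have "\<epsilon> * (b - a) = (F b - F a) / 2" using \<open>a < b\<close> by (simp add: \<epsilon>_def field_split_simps)
  finally have "g a < g b" using \<open>F a < F b\<close> by argo
  have "negligible N" using N by (simp add: negligible_iff_null_sets)
  then have "negligible (g ` (N \<inter> {a..b}))"
    by (intro negligible_abs_cont_image[OF gac]) (auto intro: negligible_subset)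
  then have "\<not> {g a<..<g b} \<subseteq> g ` (N \<inter> {a..b})"
    using open_not_negligible[of "{g a<..<g b}"] \<open>g a < g b\<close> negligible_subset by auto
  then obtain y where y: "g a < y" "y < g b" "y \<notin> g ` (N \<inter> {a..b})" by (auto simp: subset_iff)
  obtain t where t: "a < t" "t \<le> b" "g t = y" and below: "\<And>x. a \<le> x \<Longrightarrow> x < t \<Longrightarrow> g x < y"
    using continuous_on_first_crossing[OF abs_cont_on_imp_continuous_on[OF gac] y(1,2) \<open>a \<le> b\<close>] by blast
  have "t \<in> {a<..b}" "t \<notin> N" using t y(3) by auto
  then have "\<forall>\<^sub>F s in at_right 0. F t - F (t - s) \<le> \<epsilon>/2 * s"
    by (rule dini[rule_format]) (use \<open>\<epsilon> > 0\<close> in simp)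
  moreover have "\<forall>\<^sub>F s in at_right 0. s \<in> {0<..<t - a}"
    using t by (intro eventually_at_right_real) simp
  ultimately have "\<forall>\<^sub>F s in at_right 0. F t - F (t - s) \<le> \<epsilon>/2 * s \<and> s \<in> {0<..<t - a}"
    by (rule eventually_conj)
  then obtain s where s: "F t - F (t - s) \<le> \<epsilon>/2 * s" "0 < s" "s < t - a"
    using eventually_happens'[OF trivial_limit_at_right_real] by auto
  have "g (t - s) - g t = \<epsilon> * s - (F t - F (t - s))" by (simp add: g_def algebra_simps)
  moreover have "\<epsilon>/2 * s < \<epsilon> * s" using s(2) \<open>\<epsilon> > 0\<close> by simp
  ultimately have "y < g (t - s)" using s(1) t(3) by argo
  with below[of "t - s"] s show False by simp
qed

lemma antimono_if_left_dini_nonpos: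
  fixes F :: "real \<Rightarrow> real"
  assumes cont: "continuous_on {c..} F" and ac: "\<And>a b. c < a \<Longrightarrow> a \<le> b \<Longrightarrow> abs_cont_on a b F"
    and N: "N \<in> null_sets lebesgue"
    and dini: "\<And>t. c < t \<Longrightarrow> t \<notin> N \<Longrightarrow> \<forall>\<epsilon>>0. \<forall>\<^sub>F s in at_right 0. F t - F (t - s) \<le> \<epsilon> * s"
    and "c \<le> a" "a \<le> b"
  shows "F b \<le> F a"
proof -
  have away_from_c: "F y \<le> F x" if "c < x" "x \<le> y" for x y
    using that by (intro abs_cont_on_antimono_if_left_dini_nonpos[OF _ ac N dini]) auto
  show ?thesis
  proof (cases "c < a \<or> a = b")
    case True
    with away_from_c[of a b] \<open>a \<le> b\<close> show ?thesis by auto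
  next
    case False
    with \<open>c \<le> a\<close> \<open>a \<le> b\<close> have "a = c" "c < b" by auto
    have "(F \<longlongrightarrow> F c) (at c within {c..})" using cont by (simp add: continuous_on_def)
    then have "(F \<longlongrightarrow> F c) (at_right c)" by (rule tendsto_within_subset) auto
    moreover have "\<forall>\<^sub>F x in at_right c. F b \<le> F x"
      using eventually_at_right_real[OF \<open>c < b\<close>] by eventually_elim (simp add: away_from_c)
    ultimately show ?thesis
      unfolding \<open>a = c\<close> by (rule tendsto_lowerbound) simp
  qed
qed

lemma has_real_derivative_eventually_lower_bound:
  fixes f :: "real \<Rightarrow> real"
  assumes "(f has_real_derivative D) (at x)" and "\<epsilon> > 0"
  shows "\<forall>\<^sub>F h in at_right 0. (D - \<epsilon>) * h \<le> f (x + h) - f x"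
proof -
  have "((\<lambda>h. (f (x + h) - f x) / h) \<longlongrightarrow> D) (at_right 0)"
    using assms(1) unfolding DERIV_def by (rule tendsto_within_subset) simp
  then have "\<forall>\<^sub>F h in at_right 0. D - \<epsilon> < (f (x + h) - f x) / h"
    using \<open>\<epsilon> > 0\<close> by (intro order_tendstoD(1)) auto
  with eventually_at_right_less[of 0] show ?thesis
    by eventually_elim (simp add: pos_less_divide_eq)
qed

lemma has_real_derivative_left_dini:
  fixes F :: "real \<Rightarrow> real"
  assumes "(F has_real_derivative D) (at t)" and "D \<le> 0"
  shows "\<forall>\<epsilon>>0. \<forall>\<^sub>F s in at_right 0. F t - F (t - s) \<le> \<epsilon> * s"
proof (intro allI impI)
  fix \<epsilon> :: real assume "\<epsilon> > 0"
  have "((\<lambda>h. t - h) has_real_derivative -1) (at 0)" by (auto intro!: derivative_eq_intros)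
  moreover have "(F has_real_derivative D) (at ((\<lambda>h. t - h) 0))" using assms(1) by simp
  ultimately have "((\<lambda>h. F (t - h)) has_real_derivative D * -1) (at 0)" by (rule DERIV_chain')
  from has_real_derivative_eventually_lower_bound[OF this \<open>\<epsilon> > 0\<close>]
  have "\<forall>\<^sub>F s in at_right 0. (- D - \<epsilon>) * s \<le> F (t - s) - F t" by simp
  moreover have "\<forall>\<^sub>F s in at_right 0. D * s \<le> 0"
    using eventually_at_right_less[of 0] by eventually_elim (use \<open>D \<le> 0\<close> in \<open>simp add: mult_nonpos_nonneg\<close>)
  ultimately show "\<forall>\<^sub>F s in at_right 0. F t - F (t - s) \<le> \<epsilon> * s"
    by eventually_elim (simp add: algebra_simps)
qed

lemma abs_cont_on_const_if_derivative_zero_ae: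
  fixes z :: "real \<Rightarrow> 'a::real_inner"
  assumes cont: "continuous_on {c..} z" and ac: "\<And>a b. c < a \<Longrightarrow> a \<le> b \<Longrightarrow> abs_cont_on a b z"
    and N: "N \<in> null_sets lebesgue"
    and z': "\<And>t. c < t \<Longrightarrow> t \<notin> N \<Longrightarrow> (z has_vector_derivative 0) (at t)"
    and "c \<le> b"
  shows "z b = z c"
proof -
  have "inner (z b) e \<le> inner (z c) e" for e
  proof (rule antimono_if_left_dini_nonpos[OF _ _ N _ order_refl \<open>c \<le> b\<close>])
    show "continuous_on {c..} (\<lambda>t. inner (z t) e)"
      using cont by (intro continuous_intros)
    obtain K where lip: "K-lipschitz_on UNIV (\<lambda>u. inner u e)"
      using bounded_linear.lipschitz_boundE[OF bounded_linear_inner_left] by blast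
    show "abs_cont_on a b (\<lambda>t. inner (z t) e)" if "c < a" "a \<le> b" for a b
      by (rule abs_cont_on_lipschitz_compose[OF ac[OF that] lip]) simp
    show "\<forall>\<epsilon>>0. \<forall>\<^sub>F s in at_right 0. inner (z t) e - inner (z (t - s)) e \<le> \<epsilon> * s"
      if "c < t" "t \<notin> N" for t
    proof (rule has_real_derivative_left_dini)
      have "((\<lambda>t. inner (z t) e) has_derivative (\<lambda>h. inner (h *\<^sub>R 0) e)) (at t)"
        using z'[OF that] unfolding has_vector_derivative_def by (rule has_derivative_inner_left)
      then show "((\<lambda>t. inner (z t) e) has_real_derivative 0) (at t)"
        unfolding has_field_derivative_def by (rule has_derivative_eq_rhs) (simp add: fun_eq_iff)
    qed simp
  qed
  from this[of "z b - z c"] have "inner (z b - z c) (z b - z c) \<le> 0"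
    by (simp add: inner_diff_left)
  then have "inner (z b - z c) (z b - z c) = 0" using inner_ge_zero[of "z b - z c"] by linarith
  then show ?thesis by simp
qed

lemma left_dini_if_rate:
  fixes F :: "real \<Rightarrow> real"
  assumes rate: "\<forall>\<epsilon>>0. \<forall>\<^sub>F s in at_right 0. (c - \<epsilon>) * s \<le> F (t - s) - F t" and "0 \<le> c"
  shows "\<forall>\<epsilon>>0. \<forall>\<^sub>F s in at_right 0. F t - F (t - s) \<le> \<epsilon> * s"
proof (intro allI impI)
  fix \<epsilon> :: real assume "\<epsilon> > 0"
  have "\<forall>\<^sub>F s in at_right 0. 0 \<le> c * s"
    using eventually_at_right_less[of 0] by eventually_elim (use \<open>0 \<le> c\<close> in simp)
  with rate \<open>\<epsilon> > 0\<close> show "\<forall>\<^sub>F s in at_right 0. F t - F (t - s) \<le> \<epsilon> * s"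
    by (auto elim: eventually_elim2 simp: left_diff_distrib)
qed

lemma nonpos_if_eventually_rate_nonpos:
  fixes c :: real
  assumes "\<forall>\<epsilon>>0. \<forall>\<^sub>F s in at_right 0. (c - \<epsilon>) * s \<le> 0"
  shows "c \<le> 0"
proof (rule field_le_epsilon)
  fix \<epsilon> :: real assume "\<epsilon> > 0"
  with assms have "\<forall>\<^sub>F s in at_right 0. (c - \<epsilon>) * s \<le> 0 \<and> 0 < s"
    using eventually_at_right_less[of 0] by (auto intro: eventually_conj)
  then obtain s where "(c - \<epsilon>) * s \<le> 0" "0 < s"
    using eventually_happens'[OF trivial_limit_at_right_real] by blast
  then show "c \<le> 0 + \<epsilon>" by (simp add: mult_le_0_iff)
qed

section \<open>Energy dissipation along strong solutions\<close>

lemma lipschitz_on_if_gradient_lipschitz: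
  fixes j :: "'a::real_inner \<Rightarrow> real"
  assumes "bounded C" "convex C" "C \<subseteq> U"
    and j': "\<And>u. u \<in> U \<Longrightarrow> (j has_derivative (\<lambda>h. inner (gj u) h)) (at u)"
    and gj_lip: "\<And>u v. u \<in> U \<Longrightarrow> v \<in> U \<Longrightarrow> norm (gj u - gj v) \<le> L * norm (u - v)"
  obtains M where "M-lipschitz_on C j"
proof (cases "C = {}")
  case True
  then show thesis using that[of 0] by simp
next
  case False
  then obtain c where "c \<in> C" by blast
  obtain R where R: "\<And>u. u \<in> C \<Longrightarrow> norm (u - c) \<le> R"
    using \<open>bounded C\<close> unfolding bounded_any_center[of _ c] by (auto simp: dist_norm norm_minus_commute)
  define B where "B = norm (gj c) + \<bar>L\<bar> * R"
  have gj_bound: "norm (gj u) \<le> B" if "u \<in> C" for u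
  proof -
    have "norm (gj u - gj c) \<le> L * norm (u - c)"
      using gj_lip[of u c] \<open>c \<in> C\<close> that \<open>C \<subseteq> U\<close> by blast
    also have "\<dots> \<le> \<bar>L\<bar> * R" using R[OF that] by (intro mult_mono) auto
    finally show ?thesis unfolding B_def using norm_triangle_sub[of "gj u" "gj c"] by linarith
  qed
  have "0 \<le> B" using gj_bound[OF \<open>c \<in> C\<close>] norm_ge_zero order_trans by blast
  have "B-lipschitz_on C j"
  proof (rule bounded_derivative_imp_lipschitz[OF _ \<open>convex C\<close> _ \<open>0 \<le> B\<close>])
    show "(j has_derivative (\<lambda>h. inner (gj u) h)) (at u within C)" if "u \<in> C" for u
      using j'[of u] that \<open>C \<subseteq> U\<close> by (auto intro: has_derivative_at_withinI)
    show "onorm (\<lambda>h. inner (gj u) h) \<le> B" if "u \<in> C" for u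
    proof (rule onorm_bound[OF \<open>0 \<le> B\<close>])
      fix h
      have "norm (inner (gj u) h) \<le> norm (gj u) * norm h" using Cauchy_Schwarz_ineq2 by simp
      also have "\<dots> \<le> B * norm h" using gj_bound[OF that] by (intro mult_right_mono) auto
      finally show "norm (inner (gj u) h) \<le> B * norm h" .
    qed
  qed
  then show thesis by (rule that)
qed

lemma lipschitz_on_if_slope_bounded:
  fixes \<eta> L\<eta> :: "'a::real_normed_vector \<Rightarrow> real"
  assumes "bounded (L\<eta> ` C)"
    and slope: "\<And>u w. \<eta> w \<le> \<eta> u \<Longrightarrow> w \<noteq> u \<Longrightarrow> (\<eta> u - \<eta> w) / norm (u - w) \<le> L\<eta> u"
  obtains K where "K-lipschitz_on C \<eta>"
proof -
  obtain K where "K > 0" and K: "\<And>u. u \<in> C \<Longrightarrow> \<bar>L\<eta> u\<bar> \<le> K"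
    using assms(1) unfolding bounded_pos by auto
  have descent: "\<eta> u - \<eta> w \<le> K * norm (u - w)" if "u \<in> C" "\<eta> w \<le> \<eta> u" for u w
  proof (cases "w = u")
    case False
    then have "(\<eta> u - \<eta> w) / norm (u - w) \<le> K" using slope[OF that(2)] K[OF that(1)] by force
    with False show ?thesis by (simp add: pos_divide_le_eq)
  qed simp
  have "K-lipschitz_on C \<eta>"
  proof (rule lipschitz_onI)
    fix u w assume "u \<in> C" "w \<in> C"
    then show "dist (\<eta> u) (\<eta> w) \<le> K * dist u w"
      using descent[of u w] descent[of w u]
      by (cases "\<eta> w \<le> \<eta> u") (auto simp: dist_real_def dist_norm norm_minus_commute)
  qed (use \<open>K > 0\<close> in simp)
  then show thesis by (rule that)
qed

lemma has_real_derivative_backward_compose: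
  fixes z :: "real \<Rightarrow> 'a::real_inner" and j :: "'a \<Rightarrow> real"
  assumes z': "(z has_vector_derivative v) (at t)"
    and j': "(j has_derivative (\<lambda>h. inner G h)) (at (z t))"
  shows "((\<lambda>s. j (z (t - s)) + inner w (z (t - s))) has_real_derivative - inner (G + w) v) (at 0)"
proof -
  have "((\<lambda>s. t - s) has_derivative (\<lambda>h. - h)) (at 0)" by (auto intro!: derivative_eq_intros)
  moreover have "(z has_derivative (\<lambda>h. h *\<^sub>R v)) (at ((\<lambda>s. t - s) 0))"
    using z' by (simp add: has_vector_derivative_def)
  ultimately have z_back: "((\<lambda>s. z (t - s)) has_derivative (\<lambda>h. (- h) *\<^sub>R v)) (at 0)"
    by (rule has_derivative_compose)
  have "(j has_derivative (\<lambda>h. inner G h)) (at ((\<lambda>s. z (t - s)) 0))" using j' by simp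
  with z_back have "((\<lambda>s. j (z (t - s))) has_derivative (\<lambda>h. inner G ((- h) *\<^sub>R v))) (at 0)"
    by (rule has_derivative_compose)
  then have "((\<lambda>s. j (z (t - s)) + inner w (z (t - s)))
      has_derivative (\<lambda>h. inner G ((- h) *\<^sub>R v) + inner w ((- h) *\<^sub>R v))) (at 0)"
    by (intro has_derivative_add has_derivative_inner_right z_back)
  then show ?thesis
    unfolding has_field_derivative_def
    by (rule has_derivative_eq_rhs) (simp add: fun_eq_iff algebra_simps)
qed

lemma descent_rate:
  fixes z :: "real \<Rightarrow> 'a::real_inner" and j eta :: "'a \<Rightarrow> real"
  assumes z': "(z has_vector_derivative v) (at t)"
    and zC: "\<forall>\<^sub>F s in at_right 0. z (t - s) \<in> C"
    and j': "(j has_derivative (\<lambda>h. inner (gj (z t)) h)) (at (z t))"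
    and v: "v \<in> S_map C gj eta (z t)"
  shows "\<forall>\<epsilon>>0. \<forall>\<^sub>F s in at_right 0.
           (norm v ^ 2 - \<epsilon>) * s \<le> (j (z (t - s)) + eta (z (t - s))) - (j (z t) + eta (z t))"
proof (intro allI impI)
  fix \<epsilon> :: real assume "\<epsilon> > 0"
  obtain g n where g: "g \<in> subdiff eta (z t)" and n: "n \<in> normal_cone C (z t)"
    and v_eq: "v = - gj (z t) - g - n"
    using v unfolding S_map_def by blast
  (* By the subgradient and normal-cone inequalities psi s - psi 0 is a lower bound for the
     backward increase of j + eta along z, and psi is differentiable with psi' 0 = norm v ^ 2. *)
  define \<psi> where "\<psi> s = j (z (t - s)) + inner (g + n) (z (t - s))" for s
  have "gj (z t) + (g + n) = - v" using v_eq by simp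
  then have "(\<psi> has_real_derivative norm v ^ 2) (at 0)"
    unfolding \<psi>_def[abs_def] using has_real_derivative_backward_compose[OF z' j', of "g + n"]
    by (simp add: power2_norm_eq_inner)
  from has_real_derivative_eventually_lower_bound[OF this \<open>\<epsilon> > 0\<close>]
  have lower: "\<forall>\<^sub>F s in at_right 0. (norm v ^ 2 - \<epsilon>) * s \<le> \<psi> s - \<psi> 0" by simp
  have minorant: "\<psi> s - \<psi> 0 \<le> (j (z (t - s)) + eta (z (t - s))) - (j (z t) + eta (z t))"
    if "z (t - s) \<in> C" for s
  proof -
    have "eta (z t) + inner g (z (t - s) - z t) \<le> eta (z (t - s))"
      using g unfolding subdiff_def by blast
    moreover have "inner n (z (t - s) - z t) \<le> 0"
      using n that unfolding normal_cone_def by blast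
    ultimately show ?thesis by (simp add: \<psi>_def inner_diff_right inner_add_left)
  qed
  from lower zC show "\<forall>\<^sub>F s in at_right 0.
      (norm v ^ 2 - \<epsilon>) * s \<le> (j (z (t - s)) + eta (z (t - s))) - (j (z t) + eta (z t))"
    by eventually_elim (use minorant in \<open>meson order_trans\<close>)
qed

lemma strong_solutionE:
  assumes "strong_solution C gj eta z"
  obtains N where "N \<in> null_sets lebesgue"
    and "\<And>t. 0 \<le> t \<Longrightarrow> z t \<in> C" and "continuous_on {0..} z"
    and "\<And>a b. 0 < a \<Longrightarrow> a \<le> b \<Longrightarrow> abs_cont_on a b z"
    and "\<And>t. 0 < t \<Longrightarrow> t \<notin> N \<Longrightarrow> \<exists>v. (z has_vector_derivative v) (at t) \<and> v \<in> S_map C gj eta (z t)"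
proof -
  have "AE t in lborel. 0 < t \<longrightarrow> (\<exists>v. (z has_vector_derivative v) (at t) \<and> v \<in> S_map C gj eta (z t))"
    using assms unfolding strong_solution_def by blast
  then obtain N where N: "{t \<in> space lborel. \<not> (0 < t \<longrightarrow>
        (\<exists>v. (z has_vector_derivative v) (at t) \<and> v \<in> S_map C gj eta (z t)))} \<subseteq> N"
      "emeasure lborel N = 0" "N \<in> sets lborel"
    by (rule AE_E)
  have "N \<in> null_sets lebesgue"
    using N(2,3) by (intro null_sets_completionI) (simp add: null_sets_def)
  with N(1) assms show thesis by (intro that[of N]) (auto simp: strong_solution_def)
qed

text \<open>
  \<open>dissipation\<close> is a one-sided, almost-everywhere form of \<open>(F \<circ> z)' \<le> - \<parallel>z'\<parallel>\<^sup>2\<close>, with exceptional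
  null set \<open>N\<close>.
\<close>

locale energy_dissipating_curve =
  fixes z :: "real \<Rightarrow> 'a::real_inner" and F :: "real \<Rightarrow> real" and S :: "'a \<Rightarrow> 'a set"
    and N :: "real set"
  assumes curve_continuous: "continuous_on {0..} z"
    and curve_abs_cont: "\<And>a b. 0 < a \<Longrightarrow> a \<le> b \<Longrightarrow> abs_cont_on a b z"
    and energy_continuous: "continuous_on {0..} F"
    and energy_abs_cont: "\<And>a b. 0 < a \<Longrightarrow> a \<le> b \<Longrightarrow> abs_cont_on a b F"
    and exceptional_null: "N \<in> null_sets lebesgue"
    and dissipation: "\<And>t. 0 < t \<Longrightarrow> t \<notin> N \<Longrightarrow> \<exists>v. (z has_vector_derivative v) (at t) \<and> v \<in> S (z t) \<and>
           (\<forall>\<epsilon>>0. \<forall>\<^sub>F s in at_right 0. (norm v ^ 2 - \<epsilon>) * s \<le> F (t - s) - F t)"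
begin

lemma energy_antimono:
  assumes "0 \<le> a" "a \<le> b"
  shows "F b \<le> F a"
proof (rule antimono_if_left_dini_nonpos[OF energy_continuous _ exceptional_null _ assms])
  show "abs_cont_on a b F" if "0 < a" "a \<le> b" for a b
    using that by (rule energy_abs_cont)
  show "\<forall>\<epsilon>>0. \<forall>\<^sub>F s in at_right 0. F t - F (t - s) \<le> \<epsilon> * s" if t: "0 < t" "t \<notin> N" for t
  proof -
    from dissipation[OF t] obtain v where "(z has_vector_derivative v) (at t) \<and> v \<in> S (z t) \<and>
        (\<forall>\<epsilon>>0. \<forall>\<^sub>F s in at_right 0. (norm v ^ 2 - \<epsilon>) * s \<le> F (t - s) - F t)" ..
    then have "\<forall>\<epsilon>>0. \<forall>\<^sub>F s in at_right 0. (norm v ^ 2 - \<epsilon>) * s \<le> F (t - s) - F t"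
      by (rule conjunct2[THEN conjunct2])
    moreover have "0 \<le> norm v ^ 2" by simp
    ultimately show ?thesis by (rule left_dini_if_rate)
  qed
qed

lemma stationary_if_energy_constant:
  assumes const: "\<And>t. 0 \<le> t \<Longrightarrow> F t = F 0"
  shows "0 \<in> S (z 0)"
proof -
  have no_motion: "v = 0" if "0 < t"
    and v: "\<forall>\<epsilon>>0. \<forall>\<^sub>F s in at_right 0. (norm v ^ 2 - \<epsilon>) * s \<le> F (t - s) - F t" for t and v :: 'a
  proof -
    have flat: "F (t - s) - F t = 0" if "s < t" for s
      using const[of "t - s"] const[of t] that \<open>0 < t\<close> by simp
    have "\<forall>\<epsilon>>0. \<forall>\<^sub>F s in at_right 0. (norm v ^ 2 - \<epsilon>) * s \<le> 0"
    proof (intro allI impI)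
      fix \<epsilon> :: real assume "\<epsilon> > 0"
      from v[rule_format, OF this] eventually_at_right_real[OF \<open>0 < t\<close>]
      show "\<forall>\<^sub>F s in at_right 0. (norm v ^ 2 - \<epsilon>) * s \<le> 0"
        by eventually_elim (simp add: flat)
    qed
    then have "norm v ^ 2 \<le> 0" by (rule nonpos_if_eventually_rate_nonpos)
    then show "v = 0" by simp
  qed
  have resting: "(z has_vector_derivative 0) (at t)" if t: "0 < t" "t \<notin> N" for t
  proof -
    obtain v where zv: "(z has_vector_derivative v) (at t)"
      and r: "\<forall>\<epsilon>>0. \<forall>\<^sub>F s in at_right 0. (norm v ^ 2 - \<epsilon>) * s \<le> F (t - s) - F t"
      using dissipation[OF t] by blast
    with no_motion[OF t(1) r] show ?thesis by simp
  qed
  have "\<not> {0<..<1::real} \<subseteq> N"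
  proof
    assume "{0<..<1} \<subseteq> N"
    then have "negligible {0<..<1::real}"
      using exceptional_null negligible_iff_null_sets negligible_subset by blast
    then show False using open_not_negligible[of "{0<..<1::real}"] by simp
  qed
  then obtain t where "0 < t" "t \<notin> N" by (auto simp: subset_iff)
  then obtain v where v: "(z has_vector_derivative v) (at t)" "v \<in> S (z t)"
    using dissipation by blast
  have "v = 0" using vector_derivative_unique_at[OF v(1) resting[OF \<open>0 < t\<close> \<open>t \<notin> N\<close>]] .
  moreover have "z t = z 0"
    using \<open>0 < t\<close>
    by (intro abs_cont_on_const_if_derivative_zero_ae[OF curve_continuous curve_abs_cont exceptional_null resting]) auto
  ultimately show ?thesis using v(2) by simp
qed

lemma energy_drops_unless_stationary:
  assumes "0 \<notin> S (z 0)"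
  shows "\<exists>T>0. F T < (SUP t\<in>{0..T}. F t) \<and> (SUP t\<in>{0..T}. F t) \<le> F 0"
proof -
  have "\<not> (\<forall>t. 0 \<le> t \<longrightarrow> F t = F 0)"
  proof
    assume const: "\<forall>t. 0 \<le> t \<longrightarrow> F t = F 0"
    have "0 \<in> S (z 0)" by (rule stationary_if_energy_constant) (use const in blast)
    with assms show False by contradiction
  qed
  then obtain T where "T \<ge> 0" "F T \<noteq> F 0" by blast
  then have "T > 0" "F T < F 0" using energy_antimono[of 0 T] by (auto simp: order_less_le)
  moreover have "(SUP t\<in>{0..T}. F t) = F 0"
  proof (rule cSup_eq_maximum)
    show "F 0 \<in> F ` {0..T}" using \<open>T > 0\<close> by auto
    show "x \<le> F 0" if "x \<in> F ` {0..T}" for x using that energy_antimono by auto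
  qed
  ultimately show ?thesis by auto
qed

end

lemma strong_solution_energy_dissipating:
  fixes z :: "real \<Rightarrow> 'a::real_inner" and j eta :: "'a \<Rightarrow> real"
  assumes sol: "strong_solution C gj eta z" and "C \<subseteq> U"
    and j': "\<And>u. u \<in> U \<Longrightarrow> (j has_derivative (\<lambda>h. inner (gj u) h)) (at u)"
    and lip: "M-lipschitz_on C (\<lambda>u. j u + eta u)"
  obtains N where "energy_dissipating_curve z (\<lambda>t. j (z t) + eta (z t)) (S_map C gj eta) N"
proof -
  obtain N where N: "N \<in> null_sets lebesgue" and zC: "\<And>t. 0 \<le> t \<Longrightarrow> z t \<in> C"
    and zcont: "continuous_on {0..} z" and zac: "\<And>a b. 0 < a \<Longrightarrow> a \<le> b \<Longrightarrow> abs_cont_on a b z"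
    and z': "\<And>t. 0 < t \<Longrightarrow> t \<notin> N \<Longrightarrow> \<exists>v. (z has_vector_derivative v) (at t) \<and> v \<in> S_map C gj eta (z t)"
    by (rule strong_solutionE[OF sol]) blast
  have "energy_dissipating_curve z (\<lambda>t. j (z t) + eta (z t)) (S_map C gj eta) N"
  proof
    show "continuous_on {0..} (\<lambda>t. j (z t) + eta (z t))"
      using zC by (intro continuous_on_compose2[OF lipschitz_on_continuous_on[OF lip] zcont]) auto
    show "abs_cont_on a b (\<lambda>t. j (z t) + eta (z t))" if "0 < a" "a \<le> b" for a b
      using zC that by (intro abs_cont_on_lipschitz_compose[OF zac[OF that] lip]) auto
    show "\<exists>v. (z has_vector_derivative v) (at t) \<and> v \<in> S_map C gj eta (z t) \<and>
        (\<forall>\<epsilon>>0. \<forall>\<^sub>F s in at_right 0. (norm v ^ 2 - \<epsilon>) * s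
           \<le> (j (z (t - s)) + eta (z (t - s))) - (j (z t) + eta (z t)))" if t: "0 < t" "t \<notin> N" for t
    proof -
      obtain v where v: "(z has_vector_derivative v) (at t)" "v \<in> S_map C gj eta (z t)"
        using z'[OF t] by blast
      have "\<forall>\<^sub>F s in at_right 0. z (t - s) \<in> C"
        using eventually_at_right_real[OF \<open>0 < t\<close>] by eventually_elim (simp add: zC)
      moreover have "(j has_derivative (\<lambda>h. inner (gj (z t)) h)) (at (z t))"
        using zC[of t] \<open>C \<subseteq> U\<close> \<open>0 < t\<close> by (intro j') auto
      ultimately show ?thesis using descent_rate[OF v(1) _ _ v(2)] v by blast
    qed
  qed (use zcont zac N in auto)
  then show thesis by (rule that)
qed

theorem mainTheorem12:
  fixes C U :: "'a::{real_inner, complete_space} set"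
    and j eta Leta :: "'a \<Rightarrow> real"
    and gj :: "'a \<Rightarrow> 'a"
    and L :: real
    and z :: "real \<Rightarrow> 'a"
  assumes C_ne: "C \<noteq> {}" and C_bdd: "bounded C" and C_cvx: "convex C" and C_cl: "closed C"
    and U_open: "open U" and U_cvx: "convex U" and CU: "C \<subseteq> U"
    and j_diff: "\<And>u. u \<in> U \<Longrightarrow> (j has_derivative (\<lambda>h. inner (gj u) h)) (at u)"
    and gj_lip: "\<And>u v. u \<in> U \<Longrightarrow> v \<in> U \<Longrightarrow> norm (gj u - gj v) \<le> L * norm (u - v)"
    and eta_cvx: "convex_on UNIV eta"
    and eta_lsc: "lsc eta"
    and eta_loclip: "locally_lipschitz eta"
    and eta_bdd_below: "\<exists>m. \<forall>u\<in>C. m \<le> eta u"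
    and Leta_bdd: "\<And>B. bounded B \<Longrightarrow> bounded (Leta ` B)"
    and Leta_ge: "\<And>u w. eta w \<le> eta u \<Longrightarrow> w \<noteq> u \<Longrightarrow> (eta u - eta w) / norm (u - w) \<le> Leta u"
    and sol: "strong_solution C gj eta z"
    and nonstat: "0 \<notin> S_map C gj eta (z 0)"
  shows "\<exists>T>0. (j (z T) + eta (z T)) < (SUP t\<in>{0..T}. j (z t) + eta (z t))
               \<and> (SUP t\<in>{0..T}. j (z t) + eta (z t)) \<le> j (z 0) + eta (z 0)"
proof -
  obtain Mj where "Mj-lipschitz_on C j"
    using C_bdd C_cvx CU j_diff gj_lip by (rule lipschitz_on_if_gradient_lipschitz)
  moreover obtain Me where "Me-lipschitz_on C eta"
    using Leta_bdd[OF C_bdd] Leta_ge by (rule lipschitz_on_if_slope_bounded)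
  ultimately have "(Mj + Me)-lipschitz_on C (\<lambda>u. j u + eta u)" by (rule lipschitz_on_add)
  with sol CU j_diff obtain N
    where "energy_dissipating_curve z (\<lambda>t. j (z t) + eta (z t)) (S_map C gj eta) N"
    by (rule strong_solution_energy_dissipating)
  then show ?thesis using nonstat by (rule energy_dissipating_curve.energy_drops_unless_stationary)
qed

end
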